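(* Let $f:\mathbb R^n\to\mathbb R$ be differentiable with $L$-Lipschitz gradient, i.e. $\|\nabla f(x)-\nabla f(y)\|_2\le L\|x-y\|_2$ for all $x,y\in\mathbb R^n$. Let $\{x_t\}_{t\ge0}$ and $\{L_t\}_{t\ge 0}$ be generated by the AC-FW algorithm described in the context, with a damping sequence satisfying $r_t\le 1$ for all $t$. Then $L_t\le L$ for every $t\ge 0$.
   Context: Let $\mathcal A\subset\mathbb R^n$ be a compact set (the dictionary) and let the feasible set be $\mathcal X=\mathrm{conv}(\mathcal A)$ (convex hull) or $\mathcal X=\mathrm{lin}(\mathcal A)$ (linear span). For $x\neq y$ let $\ell(x,y):=2|f(y)-f(x)-\nabla f(x)^\top(y-x)|/\|y-x\|_2^2$, and $\ell(x,x):=0$. AC-FW algorithm: given a damping sequence $\{r_t\}_{t\ge0}$ of positive numbers and a direction-finding subroutine, pick $x_{-1}\in\mathcal A$, $x_0\in\arg\min_{v\in\mathcal A}\nabla f(x_{-1})^\top v$, and set $L_0:=\ell(x_{-1},x_0)$. For $t=0,1,2,\dots$: choose $v_t\in\arg\min_{v\in\mathcal A}\nabla f(x_t)^\top v$; the subroutine returns a direction $d_t\in\mathbb R^n$ and a maximal stepsize $\gamma_t^{\max}\in(0,\infty]$; set $\gamma_t:=\min\{\nabla f(x_t)^\top d_t/(L_t\|d_t\|_2^2),\,\gamma_t^{\max}\}$, $\bar x_{t+1}:=x_t-\gamma_t d_t$, $L_{t+1}:=\max\{\ell(x_t,\bar x_{t+1}),\,r_tL_t\}$, and $x_{t+1}:=\bar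 x_{t+1}$ if $f(\bar x_{t+1})<f(x_t)$, otherwise $x_{t+1}:=x_t$. *)

theory Defs
  imports "HOL-Analysis.Analysis"
begin

definition ell :: "(real^'n \<Rightarrow> real) \<Rightarrow> (real^'n \<Rightarrow> real^'n) \<Rightarrow> real^'n \<Rightarrow> real^'n \<Rightarrow> real" where
  "ell f g x y = (if x = y then 0
     else 2 * \<bar>f y - f x - g x \<bullet> (y - x)\<bar> / (norm (y - x))^2)"

text \<open>Stepsize gamma_t = min { g(x_t).d_t / (L_t |d_t|^2), gamma_max_t },
  gamma_max_t in (0, infinity] represented as an extended real.\<close>
definition acfw_step :: "real \<Rightarrow> ereal \<Rightarrow> real" where
  "acfw_step ratio gmax = real_of_ereal (min (ereal ratio) gmax)"

text \<open>The sequences are generated by AC-FW on the dictionary A with damping r,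
  starting point xm1 (= x_{-1}), iterates x, trial points xb (xb (Suc t) = bar x_{t+1}),
  FW vertices v, subroutine directions d and maximal stepsizes gmax, estimates Lc.
  The direction-finding subroutine is arbitrary.\<close>
definition acfw_run ::
  "(real^'n \<Rightarrow> real) \<Rightarrow> (real^'n \<Rightarrow> real^'n) \<Rightarrow> (real^'n) set \<Rightarrow> (nat \<Rightarrow> real)
   \<Rightarrow> real^'n \<Rightarrow> (nat \<Rightarrow> real^'n) \<Rightarrow> (nat \<Rightarrow> real^'n) \<Rightarrow> (nat \<Rightarrow> real^'n)
   \<Rightarrow> (nat \<Rightarrow> real^'n) \<Rightarrow> (nat \<Rightarrow> ereal) \<Rightarrow> (nat \<Rightarrow> real) \<Rightarrow> bool" where
  "acfw_run f g A r xm1 x xb v d gmax Lc \<longleftrightarrow>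
     xm1 \<in> A \<and> x 0 \<in> A \<and> (\<forall>u\<in>A. g xm1 \<bullet> x 0 \<le> g xm1 \<bullet> u) \<and>
     Lc 0 = ell f g xm1 (x 0) \<and>
     (\<forall>t. v t \<in> A \<and> (\<forall>u\<in>A. g (x t) \<bullet> v t \<le> g (x t) \<bullet> u) \<and>
          gmax t > 0 \<and>
          xb (Suc t) = x t - acfw_step (g (x t) \<bullet> d t / (Lc t * (norm (d t))^2)) (gmax t) *\<^sub>R d t \<and>
          Lc (Suc t) = max (ell f g (x t) (xb (Suc t))) (r t * Lc t) \<and>
          x (Suc t) = (if f (xb (Suc t)) < f (x t) then xb (Suc t) else x t))"

end

theory Submission
  imports Defs
begin

text \<open>By the descent lemma, an \<open>L\<close>-Lipschitz gradient makes every curvature estimate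
  \<open>ell(x, y)\<close> at most \<open>L\<close>. Since \<open>0 < r_t \<le> 1\<close> and \<open>L \<ge> 0\<close>, the damped term
  \<open>r_t L_t\<close> of the update \<open>L_{t+1} = max {ell(x_t, xb_{t+1}), r_t L_t}\<close> cannot push a
  bound \<open>L_t \<le> L\<close> above \<open>L\<close>.\<close>

lemma abs_diff_le_of_deriv_bound:
  fixes \<phi> \<phi>' :: "real \<Rightarrow> real"
  assumes deriv: "\<And>s. (\<phi> has_real_derivative \<phi>' s) (at s)"
    and bound: "\<And>s. 0 \<le> s \<Longrightarrow> s \<le> 1 \<Longrightarrow> \<bar>\<phi>' s\<bar> \<le> K * s"
  shows "\<bar>\<phi> 1 - \<phi> 0\<bar> \<le> K / 2"
proof -
  have deriv_sq: "((\<lambda>s. c * s\<^sup>2) has_real_derivative 2 * c * s) (at s)" for c s :: real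
    by (auto intro!: derivative_eq_intros)
  \<comment> \<open>mean value theorem for \<open>\<phi>(s) - c s\<^sup>2\<close> with \<open>c = \<plusminus>K/2\<close>\<close>
  have mvt: "\<exists>z. 0 < z \<and> z < 1 \<and> \<phi> 1 - \<phi> 0 - c = \<phi>' z - 2 * c * z" for c :: real
    using MVT2[of 0 1 "\<lambda>s. \<phi> s - c * s\<^sup>2" "\<lambda>s. \<phi>' s - 2 * c * s"]
      DERIV_diff[OF deriv deriv_sq] by auto
  obtain z1 where "0 < z1" "z1 < 1" "\<phi> 1 - \<phi> 0 - K / 2 = \<phi>' z1 - K * z1"
    using mvt[of "K / 2"] by auto
  moreover obtain z2 where "0 < z2" "z2 < 1" "\<phi> 1 - \<phi> 0 + K / 2 = \<phi>' z2 + K * z2"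
    using mvt[of "- K / 2"] by auto
  ultimately show ?thesis
    using bound[of z1] bound[of z2] unfolding abs_le_iff by linarith
qed

lemma descent_lemma:
  fixes f :: "'a::real_inner \<Rightarrow> real" and g :: "'a \<Rightarrow> 'a"
  assumes grad: "\<And>y. (f has_derivative (\<lambda>h. g y \<bullet> h)) (at y)"
    and lip: "\<And>y z. norm (g y - g z) \<le> L * norm (y - z)"
  shows "\<bar>f (x + h) - f x - g x \<bullet> h\<bar> \<le> L / 2 * (norm h)\<^sup>2"
proof -
  have deriv: "((\<lambda>s. f (x + s *\<^sub>R h) - s * (g x \<bullet> h))
      has_real_derivative (g (x + s *\<^sub>R h) - g x) \<bullet> h) (at s)" for s
  proof -
    have "((\<lambda>s. x + s *\<^sub>R h) has_derivative (\<lambda>t. t *\<^sub>R h)) (at s)"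
      by (auto intro!: derivative_eq_intros)
    from has_derivative_compose[OF this grad]
    have "((\<lambda>s. f (x + s *\<^sub>R h)) has_derivative (\<lambda>t. g (x + s *\<^sub>R h) \<bullet> (t *\<^sub>R h))) (at s)"
      by (simp add: o_def)
    then show ?thesis
      by (auto intro!: derivative_eq_intros simp: has_field_derivative_def
          inner_diff_left algebra_simps)
  qed
  have "\<bar>(g (x + s *\<^sub>R h) - g x) \<bullet> h\<bar> \<le> L * (norm h)\<^sup>2 * s" if "0 \<le> s" for s
  proof -
    have "\<bar>(g (x + s *\<^sub>R h) - g x) \<bullet> h\<bar> \<le> norm (g (x + s *\<^sub>R h) - g x) * norm h"
      by (rule Cauchy_Schwarz_ineq2)
    also have "\<dots> \<le> L * norm (s *\<^sub>R h) * norm h"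
      using lip[of "x + s *\<^sub>R h" x] by (intro mult_right_mono) auto
    also have "\<dots> = L * (norm h)\<^sup>2 * s"
      using that by (simp add: power2_eq_square)
    finally show ?thesis .
  qed
  from abs_diff_le_of_deriv_bound[OF deriv this] show ?thesis
    by (simp add: algebra_simps)
qed

lemma lipschitz_constant_nonneg:
  fixes g :: "'a::euclidean_space \<Rightarrow> 'b::real_normed_vector"
  assumes lip: "\<And>y z. norm (g y - g z) \<le> L * norm (y - z)"
  shows "0 \<le> L"
proof -
  obtain b :: 'a where "b \<in> Basis"
    using nonempty_Basis by blast
  then have "0 < norm b"
    by (auto simp: nonzero_Basis)
  moreover have "0 \<le> L * norm b"
    using order_trans[OF norm_ge_zero lip[of b 0]] by simp
  ultimately show ?thesis
    by (simp add: zero_le_mult_iff)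
qed

lemma ell_le_lipschitz_constant:
  fixes f :: "real^'n \<Rightarrow> real" and g :: "real^'n \<Rightarrow> real^'n"
  assumes grad: "\<And>y. (f has_derivative (\<lambda>h. g y \<bullet> h)) (at y)"
    and lip: "\<And>y z. norm (g y - g z) \<le> L * norm (y - z)"
  shows "ell f g a b \<le> L"
proof (cases "a = b")
  case True
  then show ?thesis
    using lipschitz_constant_nonneg[OF lip] by (simp add: ell_def)
next
  case False
  have "\<bar>f (a + (b - a)) - f a - g a \<bullet> (b - a)\<bar> \<le> L / 2 * (norm (b - a))\<^sup>2"
    by (rule descent_lemma[OF grad lip])
  with False show ?thesis
    by (simp add: ell_def divide_le_eq)
qed

lemma damped_max_le:
  fixes M e r :: "nat \<Rightarrow> real"
  assumes "M 0 \<le> B" and "0 \<le> B"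
    and "\<And>t. e t \<le> B" and "\<And>t. 0 \<le> r t" and "\<And>t. r t \<le> 1"
    and "\<And>t. M (Suc t) = max (e t) (r t * M t)"
  shows "M t \<le> B"
proof (induction t)
  case 0
  show ?case by fact
next
  case (Suc t)
  have "r t * M t \<le> r t * B"
    using Suc.IH assms(4) by (rule mult_left_mono)
  also have "\<dots> \<le> B"
    using assms(2,4,5) by (rule mult_left_le_one_le)
  finally show ?case
    using assms(3,6) by simp
qed

theorem lemma2:
  fixes f :: "real^'n \<Rightarrow> real" and g :: "real^'n \<Rightarrow> real^'n" and L :: real
    and A :: "(real^'n) set" and r :: "nat \<Rightarrow> real" and xm1 :: "real^'n"
    and x xb v d :: "nat \<Rightarrow> real^'n" and gmax :: "nat \<Rightarrow> ereal" and Lc :: "nat \<Rightarrow> real"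
  assumes grad: "\<And>y. (f has_derivative (\<lambda>h. g y \<bullet> h)) (at y)"
    and lip: "\<And>y z. norm (g y - g z) \<le> L * norm (y - z)"
    and A: "compact A" "A \<noteq> {}"
    and r_pos: "\<And>t. r t > 0" and r_le: "\<And>t. r t \<le> 1"
    and run: "acfw_run f g A r xm1 x xb v d gmax Lc"
  shows "\<forall>t. Lc t \<le> L"
proof
  fix t
  have ell_le: "ell f g a b \<le> L" for a b
    using grad lip by (rule ell_le_lipschitz_constant)
  show "Lc t \<le> L"
  proof (rule damped_max_le)
    show "Lc 0 \<le> L"
      using run ell_le by (simp add: acfw_run_def)
    show "Lc (Suc s) = max (ell f g (x s) (xb (Suc s))) (r s * Lc s)" for s
      using run by (simp add: acfw_run_def)
  qed (use lipschitz_constant_nonneg[OF lip] ell_le less_imp_le[OF r_pos] r_le in auto)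
qed

end
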